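(* Let $n\ge k\ge 4$ be integers and let $Q_1$ be the unicyclic graph on $k$ vertices consisting of a $4$-cycle $v_1v_2v_3v_4v_1$ together with $k-4$ further vertices, each adjacent (only) to $v_1$. Regard $Q_1$ as a subgraph of $K_n$ and let $\Gamma=(K_n,Q_1^-)$. Then, with $u=n-k$, $$\varphi(\Gamma,\lambda)=(\lambda+1)^{n-5}\Big(\lambda^5+(5-n)\lambda^4+(10-4n)\lambda^3+(12k-6n+4ku-38)\lambda^2+(24k-4n+8ku-91)\lambda+127n-116k-28ku-47\Big).$$
   Context: A signed graph is a pair $(G,\sigma)$ with $\sigma:E(G)\to\{+,-\}$; its adjacency matrix $A$ has $(i,j)$-entry $\sigma(v_iv_j)$ if $v_iv_j\in E(G)$ and $0$ otherwise. For a subgraph $H$ of $K_n$, $(K_n,H^-)$ denotes the signed complete graph on $n$ vertices whose negative edges are exactly the edges of $H$ and all other edges are positive. $\varphi(\Gamma,\lambda)=\det(\lambda I-A(\Gamma))$ is the characteristic polynomial. *)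

theory Defs
  imports "Jordan_Normal_Form.Char_Poly"
begin

text \<open>Vertices of K_n are 0,...,n-1. The copy of Q_1 in K_n: the 4-cycle
  v1 v2 v3 v4 v1 is 0-1-2-3-0, and the k-4 pendant vertices 4,...,k-1 are adjacent to 0.\<close>

definition Q1_edge :: "nat \<Rightarrow> nat \<Rightarrow> nat \<Rightarrow> bool" where
  "Q1_edge k i j \<longleftrightarrow>
     {i, j} = {0, 1} \<or> {i, j} = {1, 2} \<or> {i, j} = {2, 3} \<or> {i, j} = {3, 0} \<or>
     (\<exists>m. 4 \<le> m \<and> m < k \<and> {i, j} = {0, m})"

definition signed_KQ1_adj :: "nat \<Rightarrow> nat \<Rightarrow> int mat" where
  "signed_KQ1_adj n k = mat n n (\<lambda>(i, j).
     if i = j then 0 else if Q1_edge k i j then -1 else 1)"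

end

theory Submission
  imports Defs
begin

text \<open>The vertices of \<Gamma> fall into five classes: v1, {v2, v4}, v3, the pendant vertices and the
  vertices outside Q1; the entry of \<lambda>I - A at two distinct vertices depends only on their classes.
  Two vertices of one class are therefore twins, and subtracting one twin row from the other and
  adding the twin columns shows: if the last two of m + 2 vertices are twins, the leading principal
  minors satisfy D(m+2) = (\<lambda>+1)(2 D(m+1) - (\<lambda>+1) D(m)), so D(m)/(\<lambda>+1)^m is affine in m.
  As the determinant is invariant under simultaneous permutation of rows and columns, either the
  pendant or the outside vertices may be put last. Hence (\<lambda>+1)^(5-n) \<phi>(\<Gamma>, \<lambda>) is affine in the
  number of pendant vertices and in the number of outside vertices separately, and it is pinned
  down by the four determinants with k - 4 and n - k in {0, 1}.\<close>

definition leading_submat :: "nat \<Rightarrow> 'a mat \<Rightarrow> 'a mat" where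
  "leading_submat k M = mat k k (\<lambda>(i, j). M $$ (i, j))"

lemma det_eq_entry_mult_minor:
  fixes A :: "'a::comm_ring_1 mat"
  assumes A: "A \<in> carrier_mat n n" and i: "i < n"
    and row: "\<And>j. j < n \<Longrightarrow> j \<noteq> i \<Longrightarrow> A $$ (i, j) = 0"
  shows "det A = A $$ (i, i) * det (mat_delete A i i)"
proof -
  have "det A = (\<Sum>j<n. A $$ (i, j) * cofactor A i j)"
    by (rule laplace_expansion_row[OF A i])
  also have "\<dots> = (\<Sum>j<n. if j = i then A $$ (i, i) * cofactor A i i else 0)"
    by (rule sum.cong) (auto simp: row)
  finally show ?thesis
    using i by (simp add: cofactor_def)
qed

lemma det_last_col_double:
  fixes N S :: "'a::comm_ring_1 mat"
  assumes N: "N \<in> carrier_mat (Suc m) (Suc m)" and S: "S \<in> carrier_mat (Suc m) (Suc m)"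
    and minors: "\<And>i. i < Suc m \<Longrightarrow> mat_delete N i m = mat_delete S i m"
    and col: "\<And>i. i < m \<Longrightarrow> N $$ (i, m) = 2 * S $$ (i, m)"
  shows "det N = 2 * det S + (N $$ (m, m) - 2 * S $$ (m, m)) * det (mat_delete S m m)"
proof -
  have "det N = (\<Sum>i<Suc m. N $$ (i, m) * cofactor S i m)"
    using laplace_expansion_column[OF N, of m] by (simp add: cofactor_def minors)
  also have "\<dots> = (\<Sum>i<Suc m. 2 * (S $$ (i, m) * cofactor S i m))
                    + (N $$ (m, m) - 2 * S $$ (m, m)) * cofactor S m m"
    by (simp add: col algebra_simps)
  also have "(\<Sum>i<Suc m. 2 * (S $$ (i, m) * cofactor S i m)) = 2 * det S"
    by (simp add: laplace_expansion_column[OF S, of m] sum_distrib_left)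
  finally show ?thesis
    by (simp add: cofactor_def)
qed

lemma det_twin_last_indices:
  fixes M :: "'a::comm_ring_1 mat"
  assumes M: "M \<in> carrier_mat (Suc (Suc m)) (Suc (Suc m))"
    and col: "\<And>i. i < m \<Longrightarrow> M $$ (i, m) = M $$ (i, Suc m)"
    and row: "\<And>j. j < m \<Longrightarrow> M $$ (m, j) = M $$ (Suc m, j)"
    and diag: "M $$ (m, m) = a" "M $$ (Suc m, Suc m) = a"
    and off_diag: "M $$ (m, Suc m) = b" "M $$ (Suc m, m) = b"
  shows "det M = (a - b) * (2 * det (leading_submat (Suc m) M)
                            - (a - b) * det (leading_submat m M))"
proof -
  \<comment> \<open>Subtracting row m+1 from row m and adding column m to column m+1 turns row m into (a-b) e_m.\<close>
  define M1 where "M1 = addrow (-1) m (Suc m) M"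
  define M2 where "M2 = addcol 1 (Suc m) m M1"
  have M1: "M1 \<in> carrier_mat (Suc (Suc m)) (Suc (Suc m))"
    and M2: "M2 \<in> carrier_mat (Suc (Suc m)) (Suc (Suc m))"
    using M by (auto simp: M1_def M2_def)
  have "det M2 = det M1"
    unfolding M2_def by (rule det_addcol[OF _ _ M1]) auto
  also have "det M1 = det M"
    unfolding M1_def by (rule det_addrow[OF _ _ M]) auto
  finally have det_M: "det M = det M2" ..
  have M1_entry: "M1 $$ (i, j) = (if i = m then M $$ (m, j) - M $$ (Suc m, j) else M $$ (i, j))"
    if "i < Suc (Suc m)" "j < Suc (Suc m)" for i j
    using that M by (auto simp: M1_def)
  have M2_entry: "M2 $$ (i, j) = (if j = Suc m then M1 $$ (i, m) + M1 $$ (i, j) else M1 $$ (i, j))"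
    if "i < Suc (Suc m)" "j < Suc (Suc m)" for i j
    using that M1 by (auto simp: M2_def)
  have "det M2 = M2 $$ (m, m) * det (mat_delete M2 m m)"
  proof (rule det_eq_entry_mult_minor[OF M2])
    fix j assume "j < Suc (Suc m)" "j \<noteq> m"
    then consider "j < m" | "j = Suc m" by linarith
    then show "M2 $$ (m, j) = 0"
      by cases (use row diag off_diag in \<open>simp_all add: M1_entry M2_entry\<close>)
  qed simp
  moreover have "M2 $$ (m, m) = a - b"
    using diag off_diag by (simp add: M1_entry M2_entry)
  ultimately have det_M2: "det M2 = (a - b) * det (mat_delete M2 m m)"
    by simp
  define N where "N = mat_delete M2 m m"
  define S where "S = leading_submat (Suc m) M"
  have N: "N \<in> carrier_mat (Suc m) (Suc m)" and S: "S \<in> carrier_mat (Suc m) (Suc m)"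
    using M2 by (auto simp: N_def S_def leading_submat_def)
  have N_minor: "mat_delete N i m = mat_delete S i m" if "i < Suc m" for i
  proof -
    have row': "M $$ (Suc (Suc i'), j) = M $$ (Suc i', j)" if "j < m" "Suc i' = m" for i' j
      using row that by simp
    show ?thesis
      using that M2 M
      by (intro eq_matI) (auto simp: N_def S_def leading_submat_def mat_delete_def M1_entry M2_entry
          row' not_less_eq)
  qed
  have N_col: "N $$ (i, m) = 2 * S $$ (i, m)" if "i < m" for i
    using that M2 M col by (auto simp: N_def S_def leading_submat_def mat_delete_def M1_entry M2_entry)
  have N_corner: "N $$ (m, m) = a + b"
    using M2 M diag off_diag by (auto simp: N_def mat_delete_def M1_entry M2_entry)
  have "det N = 2 * det S + (N $$ (m, m) - 2 * S $$ (m, m)) * det (mat_delete S m m)"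
    by (rule det_last_col_double[OF N S N_minor N_col])
  also have "mat_delete S m m = leading_submat m M"
    by (intro eq_matI) (auto simp: S_def leading_submat_def mat_delete_def)
  finally have det_N: "det N = 2 * det S + (b - a) * det (leading_submat m M)"
    using diag N_corner by (simp add: S_def leading_submat_def algebra_simps)
  show ?thesis
    unfolding det_M det_M2 N_def[symmetric] det_N S_def by (simp add: algebra_simps)
qed

lemma det_permute_rows_cols:
  fixes A :: "'a::comm_ring_1 mat"
  assumes A: "A \<in> carrier_mat m m" and p: "p permutes {0..<m}"
  shows "det (mat m m (\<lambda>(i, j). A $$ (p i, p j))) = det A"
proof -
  define B where "B = mat m m (\<lambda>(i, j). A $$ (p i, j))"
  define C where "C = mat m m (\<lambda>(i, j). B\<^sup>T $$ (p i, j))"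
  have B: "B \<in> carrier_mat m m" and C: "C \<in> carrier_mat m m"
    by (simp_all add: B_def C_def)
  have "mat m m (\<lambda>(i, j). A $$ (p i, p j)) = C\<^sup>T"
    using p by (intro eq_matI) (auto simp: B_def C_def permutes_in_image)
  then have "det (mat m m (\<lambda>(i, j). A $$ (p i, p j))) = det C"
    using det_transpose[OF C] by simp
  also have "\<dots> = signof p * det B"
    using det_permute_rows[OF _ p, of "B\<^sup>T"] B by (simp add: C_def det_transpose)
  also have "\<dots> = signof p * signof p * det A"
    using det_permute_rows[OF A p] by (simp add: B_def)
  finally show ?thesis
    by (simp add: sign_def)
qed

definition class_mat :: "'a \<Rightarrow> ('c \<Rightarrow> 'c \<Rightarrow> 'a) \<Rightarrow> (nat \<Rightarrow> 'c) \<Rightarrow> nat \<Rightarrow> 'a mat" where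
  "class_mat x W c m = mat m m (\<lambda>(i, j). if i = j then x else W (c i) (c j))"

lemma class_mat_carrier [simp]: "class_mat x W c m \<in> carrier_mat m m"
  by (simp add: class_mat_def)

lemma leading_submat_class_mat:
  "k \<le> m \<Longrightarrow> leading_submat k (class_mat x W c m) = class_mat x W c k"
  by (intro eq_matI) (auto simp: leading_submat_def class_mat_def)

lemma det_class_mat_twins:
  fixes x :: "'a::comm_ring_1" and W :: "'c \<Rightarrow> 'c \<Rightarrow> 'a"
  assumes "c m = c (Suc m)"
  defines "d \<equiv> x - W (c m) (c m)"
  shows "det (class_mat x W c (Suc (Suc m)))
           = d * (2 * det (class_mat x W c (Suc m)) - d * det (class_mat x W c m))"
proof -
  have "det (class_mat x W c (Suc (Suc m)))
          = d * (2 * det (leading_submat (Suc m) (class_mat x W c (Suc (Suc m))))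
                 - d * det (leading_submat m (class_mat x W c (Suc (Suc m)))))"
    unfolding d_def
    by (rule det_twin_last_indices) (use assms(1) in \<open>auto simp: class_mat_def\<close>)
  then show ?thesis
    by (simp add: leading_submat_class_mat)
qed

lemma det_class_mat_reindex:
  fixes x :: "'a::comm_ring_1"
  assumes p: "p permutes {0..<m}" and c': "\<And>i. i < m \<Longrightarrow> c' i = c (p i)"
  shows "det (class_mat x W c' m) = det (class_mat x W c m)"
proof -
  have "p i < m" if "i < m" for i
    using p that by (simp add: permutes_in_image)
  moreover have "p i = p j \<longleftrightarrow> i = j" for i j
    using p by (simp add: permutes_inj inj_eq)
  ultimately have "class_mat x W c' m = mat m m (\<lambda>(i, j). class_mat x W c m $$ (p i, p j))"
    by (intro eq_matI) (auto simp: class_mat_def c')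
  then show ?thesis
    using det_permute_rows_cols[OF class_mat_carrier p] by simp
qed

lemma twin_recurrence_closed_form:
  fixes D g :: "nat \<Rightarrow> 'a::comm_ring_1"
  assumes D: "\<And>m. D (Suc (Suc m)) = c * (2 * D (Suc m) - c * D m)"
    and g: "\<And>m. g (Suc (Suc m)) = 2 * g (Suc m) - g m"
    and "a * D 0 = b * g 0" and "a * D 1 = b * c * g 1"
  shows "a * D m = b * c ^ m * g m"
proof (induction m rule: induct_nat_012)
  case (ge2 m)
  have "a * D (Suc (Suc m)) = c * (2 * (a * D (Suc m)) - c * (a * D m))"
    by (simp add: D algebra_simps)
  also have "\<dots> = b * c ^ Suc (Suc m) * (2 * g (Suc m) - g m)"
    by (simp add: ge2 algebra_simps)
  finally show ?case
    by (simp add: g)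
qed (use assms in simp_all)

lemma det_mat_Suc_first_row:
  fixes f :: "nat \<times> nat \<Rightarrow> 'a::comm_ring_1"
  shows "det (mat (Suc n) (Suc n) f) = (\<Sum>j<Suc n. (-1) ^ j * f (0, j) *
           det (mat n n (\<lambda>(i, l). f (Suc i, if l < j then l else Suc l))))"
proof -
  have "det (mat (Suc n) (Suc n) f)
          = (\<Sum>j<Suc n. mat (Suc n) (Suc n) f $$ (0, j) * cofactor (mat (Suc n) (Suc n) f) 0 j)"
    by (rule laplace_expansion_row) auto
  also have "\<dots> = (\<Sum>j<Suc n. (-1) ^ j * f (0, j) *
                    det (mat n n (\<lambda>(i, l). f (Suc i, if l < j then l else Suc l))))"
  proof (rule sum.cong[OF refl])
    fix j assume "j \<in> {..<Suc n}"
    moreover have "mat_delete (mat (Suc n) (Suc n) f) 0 j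
                     = mat n n (\<lambda>(i, l). f (Suc i, if l < j then l else Suc l))"
      by (intro eq_matI) (auto simp: mat_delete_def)
    ultimately show "mat (Suc n) (Suc n) f $$ (0, j) * cofactor (mat (Suc n) (Suc n) f) 0 j
                       = (-1) ^ j * f (0, j) *
                         det (mat n n (\<lambda>(i, l). f (Suc i, if l < j then l else Suc l)))"
      by (simp add: cofactor_def)
  qed
  finally show ?thesis .
qed

lemma det_mat_0: "det (mat 0 0 f) = 1"
  by (rule det_dim_zero) simp

lemmas det_mat_literal_simps = eval_nat_numeral BitM.simps numeral_One det_mat_Suc_first_row
  sum.lessThan_Suc lessThan_0 sum.empty det_mat_0 split if_True if_False nat.simps not_less0
  Suc_less_eq zero_less_Suc nth_Cons_0 nth_Cons_Suc power_0 power_Suc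

(* Class 0 is v1, class 1 is {v2, v4}, class 2 is v3, class 3 the pendant vertices and class 4
   the vertices outside Q1. *)
definition Q1_class :: "nat \<Rightarrow> nat \<Rightarrow> nat" where
  "Q1_class k i =
     (if i = 0 then 0 else if i = 1 \<or> i = 3 then 1 else if i = 2 then 2 else if i < k then 3 else 4)"

definition Q1_class_weight :: "nat \<Rightarrow> nat \<Rightarrow> int" where
  "Q1_class_weight a b = (if {a, b} = {0, 1} \<or> {a, b} = {1, 2} \<or> {a, b} = {0, 3} then 1 else -1)"

lemma Q1_class_weight_same [simp]: "Q1_class_weight a a = -1"
  by (auto simp: Q1_class_weight_def doubleton_eq_iff)

lemma Q1_edge_class_weight:
  "i \<noteq> j \<Longrightarrow> (if Q1_edge k i j then 1 else -1) = Q1_class_weight (Q1_class k i) (Q1_class k j)"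
  by (auto simp: Q1_edge_def Q1_class_weight_def Q1_class_def doubleton_eq_iff)

lemma poly_char_poly_signed_KQ1_adj:
  "poly (char_poly (signed_KQ1_adj n k)) x = det (class_mat x Q1_class_weight (Q1_class k) n)"
  unfolding char_poly_def
proof (rule poly_det_cong)
  show "char_poly_matrix (signed_KQ1_adj n k) \<in> carrier_mat n n"
    by (simp add: signed_KQ1_adj_def)
  fix i j assume "i < n" "j < n"
  then show "poly (char_poly_matrix (signed_KQ1_adj n k) $$ (i, j)) x
               = class_mat x Q1_class_weight (Q1_class k) n $$ (i, j)"
    using Q1_edge_class_weight[of i j k]
    by (auto simp: char_poly_matrix_def class_mat_def signed_KQ1_adj_def)
qed simp

(* The outside vertices are listed before the pendant vertices, so that the pendant vertices
   come last. *)
definition Q1_class_outside_first :: "nat \<Rightarrow> nat \<Rightarrow> nat" where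
  "Q1_class_outside_first u i = (if i < 4 then Q1_class 4 i else if i < 4 + u then 4 else 3)"

lemma det_class_mat_Q1_reorder:
  fixes x :: "'a::comm_ring_1"
  assumes k: "4 \<le> k"
  shows "det (class_mat x W (Q1_class k) (k + u))
           = det (class_mat x W (Q1_class_outside_first u) (k + u))"
proof (rule det_class_mat_reindex)
  define \<sigma> where
    "\<sigma> i = (if i < 4 then i else if i < k then i + u else if i < k + u then i - (k - 4) else i)" for i
  have "inj_on \<sigma> {0..<k + u}" and "\<sigma> ` {0..<k + u} \<subseteq> {0..<k + u}"
    using k by (auto simp: inj_on_def \<sigma>_def)
  then have "bij_betw \<sigma> {0..<k + u} {0..<k + u}"
    by (simp add: bij_betw_def endo_inj_surj)
  then show "\<sigma> permutes {0..<k + u}"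
    by (rule bij_imp_permutes) (simp add: \<sigma>_def)
  show "Q1_class k i = Q1_class_outside_first u (\<sigma> i)" if "i < k + u" for i
    using that k by (auto simp: Q1_class_def Q1_class_outside_first_def \<sigma>_def)
qed

definition Q1_quintic :: "int \<Rightarrow> int \<Rightarrow> int \<Rightarrow> int" where
  "Q1_quintic n k x = x ^ 5 + (5 - n) * x ^ 4 + (10 - 4 * n) * x ^ 3
     + (12 * k - 6 * n + 4 * k * (n - k) - 38) * x ^ 2
     + (24 * k - 4 * n + 8 * k * (n - k) - 91) * x
     + (127 * n - 116 * k - 28 * k * (n - k) - 47)"

lemma Q1_quintic_affine_n:
  "Q1_quintic (n + 2) k x = 2 * Q1_quintic (n + 1) k x - Q1_quintic n k x"
  by (simp add: Q1_quintic_def algebra_simps)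

lemma Q1_quintic_affine_diagonal:
  "Q1_quintic (n + 2) (k + 2) x = 2 * Q1_quintic (n + 1) (k + 1) x - Q1_quintic n k x"
  by (simp add: Q1_quintic_def algebra_simps power2_eq_square)

lemma det_Q1_n4_k4:
  "det (class_mat x Q1_class_weight (Q1_class_outside_first 0) 4) = x^4 - 6*x^2 - 8*x - 3"
proof -
  have "class_mat x Q1_class_weight (Q1_class_outside_first 0) 4 = mat 4 4 (\<lambda>(i, j).
          [[x, 1, -1, 1],
           [1, x, 1, -1],
           [-1, 1, x, 1],
           [1, -1, 1, x]] ! i ! j)"
    by (intro eq_matI) (auto simp: class_mat_def Q1_class_outside_first_def Q1_class_def
        Q1_class_weight_def doubleton_eq_iff eval_nat_numeral less_Suc_eq)
  then show ?thesis
    by (simp only: det_mat_literal_simps) (simp add: algebra_simps)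
qed

lemma det_Q1_n5_k5:
  "det (class_mat x Q1_class_weight (Q1_class_outside_first 0) 5) = x^5 - 10*x^3 - 8*x^2 + 9*x + 8"
proof -
  have "class_mat x Q1_class_weight (Q1_class_outside_first 0) 5 = mat 5 5 (\<lambda>(i, j).
          [[x, 1, -1, 1, 1],
           [1, x, 1, -1, -1],
           [-1, 1, x, 1, -1],
           [1, -1, 1, x, -1],
           [1, -1, -1, -1, x]] ! i ! j)"
    by (intro eq_matI) (auto simp: class_mat_def Q1_class_outside_first_def Q1_class_def
        Q1_class_weight_def doubleton_eq_iff eval_nat_numeral less_Suc_eq)
  then show ?thesis
    by (simp only: det_mat_literal_simps) (simp add: algebra_simps)
qed

lemma det_Q1_n5_k4:
  "det (class_mat x Q1_class_weight (Q1_class_outside_first 1) 5) = x^5 - 10*x^3 - 4*x^2 + 17*x + 12"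
proof -
  have "class_mat x Q1_class_weight (Q1_class_outside_first 1) 5 = mat 5 5 (\<lambda>(i, j).
          [[x, 1, -1, 1, -1],
           [1, x, 1, -1, -1],
           [-1, 1, x, 1, -1],
           [1, -1, 1, x, -1],
           [-1, -1, -1, -1, x]] ! i ! j)"
    by (intro eq_matI) (auto simp: class_mat_def Q1_class_outside_first_def Q1_class_def
        Q1_class_weight_def doubleton_eq_iff eval_nat_numeral less_Suc_eq)
  then show ?thesis
    by (simp only: det_mat_literal_simps) (simp add: algebra_simps)
qed

lemma det_Q1_n6_k5:
  "det (class_mat x Q1_class_weight (Q1_class_outside_first 1) 6)
     = x^6 - 15*x^4 - 8*x^3 + 51*x^2 + 40*x - 5"
proof -
  have "class_mat x Q1_class_weight (Q1_class_outside_first 1) 6 = mat 6 6 (\<lambda>(i, j).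
          [[x, 1, -1, 1, -1, 1],
           [1, x, 1, -1, -1, -1],
           [-1, 1, x, 1, -1, -1],
           [1, -1, 1, x, -1, -1],
           [-1, -1, -1, -1, x, -1],
           [1, -1, -1, -1, -1, x]] ! i ! j)"
    by (intro eq_matI) (auto simp: class_mat_def Q1_class_outside_first_def Q1_class_def
        Q1_class_weight_def doubleton_eq_iff eval_nat_numeral less_Suc_eq)
  then show ?thesis
    by (simp only: det_mat_literal_simps) (simp add: algebra_simps)
qed

lemma det_Q1_pendants_last:
  assumes "u \<le> 1"
  shows "(x + 1) ^ 5 * det (class_mat x Q1_class_weight (Q1_class_outside_first u) (4 + u + p))
           = (x + 1) ^ (4 + u + p) * Q1_quintic (4 + u + p) (4 + p) x"
proof -
  define D where "D p = det (class_mat x Q1_class_weight (Q1_class_outside_first u) (4 + u + p))"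
    for p
  define g where "g p = Q1_quintic (4 + u + p) (4 + p) x" for p
  have "(x + 1) ^ 5 * D p = (x + 1) ^ (4 + u) * (x + 1) ^ p * g p"
  proof (rule twin_recurrence_closed_form)
    fix m
    have "Q1_class_outside_first u (4 + u + m) = Q1_class_outside_first u (Suc (4 + u + m))"
      by (simp add: Q1_class_outside_first_def)
    from det_class_mat_twins[OF this, of x Q1_class_weight]
    show "D (Suc (Suc m)) = (x + 1) * (2 * D (Suc m) - (x + 1) * D m)"
      by (simp add: D_def)
    show "g (Suc (Suc m)) = 2 * g (Suc m) - g m"
      using Q1_quintic_affine_diagonal[of "4 + u + m" "4 + m" x] by (simp add: g_def algebra_simps)
  next
    have "(x + 1) ^ 5 * det (class_mat x Q1_class_weight (Q1_class_outside_first 0) 4)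
            = (x + 1) ^ 4 * Q1_quintic 4 4 x"
      and "(x + 1) ^ 5 * det (class_mat x Q1_class_weight (Q1_class_outside_first 0) 5)
            = (x + 1) ^ 4 * (x + 1) * Q1_quintic 5 5 x"
      and "(x + 1) ^ 5 * det (class_mat x Q1_class_weight (Q1_class_outside_first 1) 5)
            = (x + 1) ^ 5 * Q1_quintic 5 4 x"
      and "(x + 1) ^ 5 * det (class_mat x Q1_class_weight (Q1_class_outside_first 1) 6)
            = (x + 1) ^ 5 * (x + 1) * Q1_quintic 6 5 x"
      unfolding det_Q1_n4_k4 det_Q1_n5_k5 det_Q1_n5_k4 det_Q1_n6_k5 Q1_quintic_def
      by (simp_all add: eval_nat_numeral algebra_simps)
    moreover have "u = 0 \<or> u = 1"
      using assms by linarith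
    ultimately show "(x + 1) ^ 5 * D 0 = (x + 1) ^ (4 + u) * g 0"
      and "(x + 1) ^ 5 * D 1 = (x + 1) ^ (4 + u) * (x + 1) * g 1"
      by (auto simp: D_def g_def)
  qed
  then show ?thesis
    by (simp add: D_def g_def power_add)
qed

lemma det_Q1_outside_last:
  assumes k: "4 \<le> k"
  shows "(x + 1) ^ 5 * det (class_mat x Q1_class_weight (Q1_class k) (k + u))
           = (x + 1) ^ (k + u) * Q1_quintic (k + u) k x"
proof -
  define D where "D u = det (class_mat x Q1_class_weight (Q1_class k) (k + u))" for u
  define g where "g u = Q1_quintic (k + u) k x" for u
  have "(x + 1) ^ 5 * D u = (x + 1) ^ k * (x + 1) ^ u * g u"
  proof (rule twin_recurrence_closed_form)
    fix m
    have "Q1_class k (k + m) = Q1_class k (Suc (k + m))"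
      using k by (simp add: Q1_class_def)
    from det_class_mat_twins[OF this, of x Q1_class_weight]
    show "D (Suc (Suc m)) = (x + 1) * (2 * D (Suc m) - (x + 1) * D m)"
      by (simp add: D_def)
    show "g (Suc (Suc m)) = 2 * g (Suc m) - g m"
      using Q1_quintic_affine_n[of "k + m" k x] by (simp add: g_def algebra_simps)
  next
    have "(x + 1) ^ 5 * D u = (x + 1) ^ (k + u) * g u" if "u \<le> 1" for u
    proof -
      have "4 + u + (k - 4) = k + u" "4 + (k - 4) = k"
        using k by simp_all
      then show ?thesis
        using det_Q1_pendants_last[OF that, of x "k - 4"] det_class_mat_Q1_reorder[OF k, of x _ u]
        by (simp add: D_def g_def add_ac)
    qed
    from this[of 0] this[of 1]
    show "(x + 1) ^ 5 * D 0 = (x + 1) ^ k * g 0"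
      and "(x + 1) ^ 5 * D 1 = (x + 1) ^ k * (x + 1) * g 1"
      by simp_all
  qed
  then show ?thesis
    by (simp add: D_def g_def power_add)
qed

theorem lemma3p1:
  fixes n k :: nat
  assumes "4 \<le> k" and "k \<le> n"
  defines "u \<equiv> int n - int k"
  shows "[:1, 1:] ^ 5 * char_poly (signed_KQ1_adj n k) =
         [:1, 1:] ^ n *
         [: 127 * int n - 116 * int k - 28 * int k * u - 47,
            24 * int k - 4 * int n + 8 * int k * u - 91,
            12 * int k - 6 * int n + 4 * int k * u - 38,
            10 - 4 * int n,
            5 - int n,
            1 :]" (is "?lhs = [:1, 1:] ^ n * ?quintic")
proof -
  obtain v where n: "n = k + v"
    using assms(2) le_Suc_ex by blast
  have "poly ?lhs x = (x + 1) ^ 5 * det (class_mat x Q1_class_weight (Q1_class k) (k + v))" for x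
    by (simp add: poly_char_poly_signed_KQ1_adj n add_ac)
  also have "\<dots> x = (x + 1) ^ n * Q1_quintic n k x" for x
    using det_Q1_outside_last[OF assms(1)] n by simp
  also have "\<dots> x = poly ([:1, 1:] ^ n * ?quintic) x" for x
    by (simp add: Q1_quintic_def u_def eval_nat_numeral algebra_simps)
  finally show ?thesis
    by (rule poly_ext)
qed

end
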